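(* Assume that $\sigma>0$ and $d>0$. For any $\varepsilon\in(0,1)$ and $c\in(0,\infty)$, let $$L:=\sigma^2+2\int_{[-\varepsilon,0)}z^2\nu(dz),\qquad \tau_0:=\frac{c^2}{\big(\nu((-\infty,-\varepsilon))-\sigma^2/2\big)^2}.$$ Then for any $\tau\in(0,\tau_0]$, $$\mathbb{P}\big(X^W_\tau+J^-_\tau\ge c\sqrt\tau\big)\le e^{-Lp^2/2},\qquad\text{where } p=\frac1L\Big[c-\sqrt\tau\Big(\nu((-\infty,-\varepsilon))-\frac{\sigma^2}{2}\Big)\Big]\in[0,\infty).$$
   Context: $X$ is a Lévy process with Lévy triplet $(b,\sigma^2,\nu)$ such that: (i) $\sigma\neq0$, or $\nu((-\infty,0))>0$, or $\int_{(0,1]}z\,\nu(dz)=\infty$; (ii) $\sigma\neq0$, or $\nu((0,\infty))>0$, or $\int_{[-1,0)}|z|\,\nu(dz)=\infty$; (iii) $\int_1^\infty e^z\nu(dz)<\infty$ and $b=-\frac{\sigma^2}{2}-\int_{\mathbb{R}\setminus\{0\}}(e^z-1-z\mathbf 1_{\{|z|\le1\}})\nu(dz)$. Its Lévy–Itô decomposition involves a standard Brownian motion $W$ and an independent Poisson random measure $N(ds,dz)$ with intensity $ds\,\nu(dz)$ and compensated measure $\widetilde N$. Given $r,\delta\ge0$, $d:=r-\delta-\int_{(0,\infty)}(e^z-1)\nu(dz)$. Define $X^W_t:=\sigma W_t-\frac{\sigma^2t}{2}$ and $J^-_t:=\int_0^t\int_{(-\infty,0)}z\,\widetilde N(ds,dz)-t\int_{(-\infty,0)}(e^z-1-z)\nu(dz)$.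 (If $\nu((-\infty,-\varepsilon))=\sigma^2/2$, $\tau_0=\infty$.) *)

theory Defs
  imports "HOL-Probability.Probability"
begin

definition levy_measure :: "real measure \<Rightarrow> bool" where
  "levy_measure \<nu> \<longleftrightarrow> sets \<nu> = sets borel \<and> emeasure \<nu> {0} = 0
     \<and> integrable \<nu> (\<lambda>z. min 1 (z\<^sup>2))"

text \<open>Law at time t of the compensated Poisson integral
  int_0^t int_(-inf,0) z Ntilde(ds,dz), given through its characteristic function
  exp (t * int_(-inf,0) (e^(iuz) - 1 - iuz) nu(dz)).\<close>
definition comp_neg_jump_char :: "real measure \<Rightarrow> real \<Rightarrow> real \<Rightarrow> complex" where
  "comp_neg_jump_char \<nu> t u =
     exp (complex_of_real t *
       set_lebesgue_integral \<nu> {..<0}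
         (\<lambda>z. iexp (u * z) - 1 - \<i> * complex_of_real (u * z)))"

definition bm_marginals :: "'a measure \<Rightarrow> (real \<Rightarrow> 'a \<Rightarrow> real) \<Rightarrow> bool" where
  "bm_marginals M W \<longleftrightarrow> (\<forall>x\<in>space M. W 0 x = 0) \<and>
     (\<forall>t>0. distributed M lborel (W t) (normal_density 0 (sqrt t)))"

end

theory Submission
  imports Defs
begin

text \<open>
  Chernoff bound: for \<open>\<theta> \<ge> 0\<close> the tail probability is at most \<open>exp (- \<theta> c sqrt \<tau>)\<close> times
  the exponential moment of \<open>X\<^sup>W + J\<^sup>-\<close> at time \<open>\<tau>\<close>, which factorises by independence. The compensated negative-jump integral is only known through its
  characteristic function, so its exponential moment is bounded by approximation: lumping the
  mass of \<open>\<nu>\<close> on \<open>(-n, -1/n]\<close> onto the grid \<open>\<int>/n\<close> gives centred compound Poisson laws whose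
  characteristic functions converge (dominated convergence), which therefore converge weakly
  by Levy's continuity theorem, and whose exponential moments are explicit; exponential
  moments can only drop in the weak limit. This gives \<open>E exp (\<theta> J) \<le> exp (\<tau> \<Phi>)\<close> with
  \<open>\<Phi>\<close> the integral of \<open>exp (\<theta> z) - 1 - \<theta> z\<close> over \<open>z < 0\<close>. Splitting at \<open>-\<epsilon>\<close>, a small jump \<open>z\<close>
  contributes at most \<open>\<theta>\<^sup>2 z\<^sup>2 / 2\<close> and a large jump at most \<open>\<theta>\<close> beyond the compensating drift,
  and the choice \<open>\<theta> = p / sqrt \<tau>\<close> turns the exponent into \<open>- L p\<^sup>2 / 2 - p\<^sup>2 I / 2\<close>, where
  \<open>I\<close> is the integral of \<open>z\<^sup>2\<close> over \<open>[-\<epsilon>, 0)\<close>.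
\<close>

section \<open>Bounds on compensated exponentials\<close>

lemma exp_le_quadratic_of_nonpos:
  fixes x :: real
  assumes "x \<le> 0"
  shows "exp x \<le> 1 + x + x\<^sup>2 / 2"
proof -
  let ?f = "\<lambda>x::real. 1 + x + x\<^sup>2 / 2 - exp x"
  have deriv: "(?f has_real_derivative (1 + y - exp y)) (at y)" for y
    by (auto intro!: derivative_eq_intros simp: power2_eq_square)
  have "?f 0 \<le> ?f x"
    using assms by (intro DERIV_nonpos_imp_nonincreasing[of x 0 ?f])
      (auto intro!: exI deriv simp: exp_ge_add_one_self)
  then show ?thesis by simp
qed

lemma exp_compensated_bounds:
  fixes x :: real
  assumes "x \<le> 0"
  shows "0 \<le> exp x - 1 - x" and "exp x - 1 - x \<le> x\<^sup>2 / 2" and "exp x - 1 - x \<le> 2 * \<bar>x\<bar>"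
proof -
  have "exp x \<le> 1" and "1 + x \<le> exp x" and "\<bar>x\<bar> = - x"
    using assms exp_ge_add_one_self[of x] by auto
  then show "0 \<le> exp x - 1 - x" and "exp x - 1 - x \<le> x\<^sup>2 / 2" and "exp x - 1 - x \<le> 2 * \<bar>x\<bar>"
    using exp_le_quadratic_of_nonpos[OF assms] assms by linarith+
qed

lemma norm_iexp_compensated_le:
  shows "cmod (iexp x - 1 - \<i> * complex_of_real x) \<le> x\<^sup>2 / 2"
    and "cmod (iexp x - 1 - \<i> * complex_of_real x) \<le> 2 * \<bar>x\<bar>"
proof -
  show "cmod (iexp x - 1 - \<i> * complex_of_real x) \<le> x\<^sup>2 / 2"
    using iexp_approx1[of x 1] by (simp add: power2_eq_square diff_diff_eq)
  have "cmod (iexp x - 1) \<le> \<bar>x\<bar>" using iexp_approx1[of x 0] by simp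
  then show "cmod (iexp x - 1 - \<i> * complex_of_real x) \<le> 2 * \<bar>x\<bar>"
    using norm_triangle_ineq4[of "iexp x - 1" "\<i> * complex_of_real x"] by (simp add: norm_mult)
qed

lemma exp_compensated_difference_le:
  fixes \<theta> \<epsilon> z :: real
  assumes \<theta>: "0 \<le> \<theta>" and \<epsilon>: "0 < \<epsilon>"
  shows "indicator {..<0} z * (exp (\<theta> * z) - 1 - \<theta> * z) - \<theta> * (indicator {..<0} z * (exp z - 1 - z))
     \<le> \<theta>\<^sup>2 / 2 * (indicator {-\<epsilon>..<0} z * z\<^sup>2) + \<theta> * indicator {..<-\<epsilon>} z"
proof (cases "z < 0")
  case neg: True
  have \<theta>z: "\<theta> * z \<le> 0" using \<theta> neg by (simp add: mult_nonneg_nonpos)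
  show ?thesis
  proof (cases "-\<epsilon> \<le> z")
    case True
    have "0 \<le> \<theta> * (exp z - 1 - z)"
      using \<theta> exp_compensated_bounds(1)[of z] neg by simp
    then show ?thesis
      using True neg exp_compensated_bounds(2)[OF \<theta>z]
      by (simp add: indicator_def power_mult_distrib)
  next
    case False
    have "exp (\<theta> * z) \<le> 1" and "0 \<le> \<theta> * exp z" using \<theta>z \<theta> by simp_all
    moreover have "(exp (\<theta> * z) - 1 - \<theta> * z) - \<theta> * (exp z - 1 - z) =
        exp (\<theta> * z) - 1 - \<theta> * exp z + \<theta>"
      by (simp add: algebra_simps)
    ultimately have "(exp (\<theta> * z) - 1 - \<theta> * z) - \<theta> * (exp z - 1 - z) \<le> \<theta>"
      by linarith
    then show ?thesis using False neg by (simp add: indicator_def)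
  qed
qed (use \<epsilon> \<theta> in \<open>auto simp: indicator_def\<close>)

section \<open>Centred compound Poisson laws\<close>

text \<open>The library's \<^const>\<open>poisson_pmf\<close> needs a positive rate; rate \<open>0\<close> gives the point
  mass at \<open>0\<close>.\<close>

definition poisson_law :: "real \<Rightarrow> nat pmf" where
  "poisson_law r = (if 0 < r then poisson_pmf r else return_pmf 0)"

lemma integral_iexp_poisson_law:
  assumes "0 \<le> r"
  shows "(\<integral>k. iexp (u * (a * (real k - r))) \<partial>measure_pmf (poisson_law r)) =
    exp (r * (iexp (u * a) - 1 - \<i> * complex_of_real (u * a)))"
proof (cases "r = 0")
  case False
  then have pos: "0 < r" using assms by simp
  define f where "f k = (r ^ k / fact k * exp (-r)) *\<^sub>R iexp (u * (a * real k))" for k :: nat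
  have f_eq: "f k = exp (- r) * ((r * iexp (u * a)) ^ k /\<^sub>R fact k)" for k
  proof -
    have "iexp (u * (a * real k)) = iexp (u * a) ^ k"
      by (simp add: exp_of_nat_mult[symmetric] algebra_simps)
    then show ?thesis
      by (simp add: f_def scaleR_conv_of_real power_mult_distrib field_simps)
  qed
  have f_sums: "f sums (exp (- r) * exp (r * iexp (u * a)))"
    unfolding f_eq by (intro sums_mult exp_converges)
  have "summable (\<lambda>k. norm (r ^ k /\<^sub>R fact k) * exp (- r))"
    by (intro summable_mult2 summable_norm_exp)
  then have f_int: "integrable (count_space UNIV) f"
    unfolding integrable_count_space_nat_iff
    using pos by (simp add: f_def norm_mult divide_inverse abs_mult mult_ac)
  have "(\<integral>k. iexp (u * (a * real k)) \<partial>measure_pmf (poisson_pmf r)) = (\<integral>k. f k \<partial>count_space UNIV)"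
    unfolding measure_pmf_eq_density using pos
    by (subst integral_density) (auto simp: f_def[abs_def])
  also have "\<dots> = exp (- r) * exp (r * iexp (u * a))"
    using sums_unique[OF f_sums] integral_count_space_nat[OF f_int] by simp
  finally have poisson: "(\<integral>k. iexp (u * (a * real k)) \<partial>measure_pmf (poisson_pmf r)) =
      exp (- r) * exp (r * iexp (u * a))" .
  have "(\<integral>k. iexp (u * (a * (real k - r))) \<partial>measure_pmf (poisson_pmf r)) =
      (\<integral>k. iexp (- u * a * r) * iexp (u * (a * real k)) \<partial>measure_pmf (poisson_pmf r))"
    by (intro Bochner_Integration.integral_cong) (simp_all add: exp_add[symmetric] algebra_simps)
  also have "\<dots> = iexp (- u * a * r) * (exp (- r) * exp (r * iexp (u * a)))"
    by (simp only: integral_mult_right_zero poisson)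
  also have "\<dots> = exp (r * (iexp (u * a) - 1 - \<i> * complex_of_real (u * a)))"
    by (simp add: exp_add[symmetric] exp_of_real[symmetric] algebra_simps)
  finally show ?thesis using pos by (simp add: poisson_law_def)
qed (simp add: poisson_law_def)

lemma nn_integral_exp_poisson_law:
  assumes "0 \<le> r"
  shows "(\<integral>\<^sup>+k. exp (\<theta> * (a * (real k - r))) \<partial>measure_pmf (poisson_law r)) =
    exp (r * (exp (\<theta> * a) - 1 - \<theta> * a))"
proof (cases "r = 0")
  case False
  then have pos: "0 < r" using assms by simp
  define f where "f k = r ^ k / fact k * exp (- r) * exp (\<theta> * (a * (real k - r)))" for k :: nat
  have f_eq: "f k = exp (- r - \<theta> * a * r) * ((r * exp (\<theta> * a)) ^ k /\<^sub>R fact k)" for k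
  proof -
    have "exp (\<theta> * (a * (real k - r))) = exp (- \<theta> * a * r) * exp (\<theta> * a) ^ k"
      by (simp add: exp_of_nat_mult[symmetric] exp_add[symmetric] algebra_simps)
    then show ?thesis
      by (simp add: f_def exp_diff power_mult_distrib field_simps exp_minus)
  qed
  have "exp (- r - \<theta> * a * r) * exp (r * exp (\<theta> * a)) = exp (r * (exp (\<theta> * a) - 1 - \<theta> * a))"
    by (simp add: exp_add[symmetric] algebra_simps)
  moreover have "f sums (exp (- r - \<theta> * a * r) * exp (r * exp (\<theta> * a)))"
    unfolding f_eq by (intro sums_mult exp_converges)
  ultimately have f_sums: "f sums (exp (r * (exp (\<theta> * a) - 1 - \<theta> * a)))"
    by simp
  have "(\<integral>\<^sup>+k. exp (\<theta> * (a * (real k - r))) \<partial>measure_pmf (poisson_pmf r)) = (\<Sum>k. ennreal (f k))"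
    unfolding nn_integral_measure_pmf nn_integral_count_space_nat
    using pos by (simp add: f_def ennreal_mult'[symmetric])
  also have "\<dots> = exp (r * (exp (\<theta> * a) - 1 - \<theta> * a))"
    using f_sums pos by (subst suminf_ennreal2) (auto simp: sums_iff f_def)
  finally show ?thesis using pos by (simp add: poisson_law_def)
qed (simp add: poisson_law_def)

definition compound_poisson_counts ::
    "'i set \<Rightarrow> ('i \<Rightarrow> real) \<Rightarrow> ('i \<Rightarrow> nat) pmf" where
  "compound_poisson_counts K r = Pi_pmf K 0 (\<lambda>k. poisson_law (r k))"

definition centred_compound_poisson ::
    "'i set \<Rightarrow> ('i \<Rightarrow> real) \<Rightarrow> ('i \<Rightarrow> real) \<Rightarrow> real measure" where
  "centred_compound_poisson K a r = distr (measure_pmf (compound_poisson_counts K r)) borel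
     (\<lambda>f. \<Sum>k\<in>K. a k * (real (f k) - r k))"

lemma real_distribution_centred_compound_poisson:
  "real_distribution (centred_compound_poisson K a r)"
  unfolding centred_compound_poisson_def real_distribution_def real_distribution_axioms_def
  by (auto intro!: prob_space.prob_space_distr prob_space_measure_pmf)

lemma char_centred_compound_poisson:
  assumes K: "finite K" and r: "\<And>k. k \<in> K \<Longrightarrow> 0 \<le> r k"
  shows "char (centred_compound_poisson K a r) u =
    exp (\<Sum>k\<in>K. r k * (iexp (u * a k) - 1 - \<i> * complex_of_real (u * a k)))"
proof -
  let ?N = "measure_pmf (compound_poisson_counts K r)"
  let ?X = "\<lambda>k f. a k * (real (f k) - r k)"
  have "prob_space.indep_vars ?N (\<lambda>_. borel) ?X K"
    using prob_space.indep_vars_compose2[OF prob_space_measure_pmf indep_vars_Pi_pmf[OF K],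
        of "\<lambda>k n. a k * (real n - r k)" "\<lambda>_. borel"]
    unfolding compound_poisson_counts_def by simp
  then have "char (centred_compound_poisson K a r) u = (\<Prod>k\<in>K. char (distr ?N borel (?X k)) u)"
    unfolding centred_compound_poisson_def
    by (rule prob_space.char_distr_sum[OF prob_space_measure_pmf])
  also have "\<dots> = (\<Prod>k\<in>K. exp (r k * (iexp (u * a k) - 1 - \<i> * complex_of_real (u * a k))))"
  proof (intro prod.cong refl)
    fix k assume k: "k \<in> K"
    have "char (distr ?N borel (?X k)) u = (\<integral>f. iexp (u * (a k * (real (f k) - r k))) \<partial>?N)"
      unfolding char_def by (subst integral_distr) auto
    also have "\<dots> = (\<integral>n. iexp (u * (a k * (real n - r k)))
        \<partial>measure_pmf (map_pmf (\<lambda>f. f k) (compound_poisson_counts K r)))"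
      by simp
    also have "\<dots> = exp (r k * (iexp (u * a k) - 1 - \<i> * complex_of_real (u * a k)))"
      unfolding compound_poisson_counts_def Pi_pmf_component[OF K]
      using k integral_iexp_poisson_law[OF r[OF k], of u "a k"] by simp
    finally show "char (distr ?N borel (?X k)) u =
        exp (r k * (iexp (u * a k) - 1 - \<i> * complex_of_real (u * a k)))" .
  qed
  also have "\<dots> = exp (\<Sum>k\<in>K. r k * (iexp (u * a k) - 1 - \<i> * complex_of_real (u * a k)))"
    by (rule exp_sum[OF K, symmetric])
  finally show ?thesis .
qed

lemma nn_integral_exp_centred_compound_poisson:
  assumes K: "finite K" and r: "\<And>k. k \<in> K \<Longrightarrow> 0 \<le> r k"
  shows "(\<integral>\<^sup>+x. exp (\<theta> * x) \<partial>centred_compound_poisson K a r) =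
    exp (\<Sum>k\<in>K. r k * (exp (\<theta> * a k) - 1 - \<theta> * a k))"
proof -
  have "(\<integral>\<^sup>+x. exp (\<theta> * x) \<partial>centred_compound_poisson K a r) =
      (\<integral>\<^sup>+f. (\<Prod>k\<in>K. ennreal (exp (\<theta> * (a k * (real (f k) - r k))))) \<partial>compound_poisson_counts K r)"
    unfolding centred_compound_poisson_def
    by (subst nn_integral_distr)
      (auto intro!: nn_integral_cong simp: prod_ennreal exp_sum[OF K, symmetric] sum_distrib_left)
  also have "\<dots> = (\<Prod>k\<in>K. ennreal (exp (r k * (exp (\<theta> * a k) - 1 - \<theta> * a k))))"
    unfolding compound_poisson_counts_def
      nn_integral_prod_Pi_pmf[OF K, of _ _ "\<lambda>k n. ennreal (exp (\<theta> * (a k * (real n - r k))))"]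
    using r by (intro prod.cong refl) (simp add: nn_integral_exp_poisson_law)
  also have "\<dots> = exp (\<Sum>k\<in>K. r k * (exp (\<theta> * a k) - 1 - \<theta> * a k))"
    by (simp add: prod_ennreal exp_sum[OF K])
  finally show ?thesis .
qed

section \<open>Discretising a Levy measure on the negative half-line\<close>

lemma
  assumes "levy_measure \<nu>"
  shows levy_measure_sets: "sets \<nu> = sets borel"
    and levy_measure_space: "space \<nu> = UNIV"
    and levy_measure_integrable_min_square: "integrable \<nu> (\<lambda>z. min 1 (z\<^sup>2))"
  using assms sets_eq_imp_space_eq[of \<nu> borel] by (auto simp: levy_measure_def)

lemma levy_measure_integrable_indicator_away_from_zero:
  assumes levy: "levy_measure \<nu>" and A: "A \<in> sets borel" and \<delta>: "0 < \<delta>"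
    and A_away: "A \<subseteq> {z. \<delta> \<le> \<bar>z\<bar>}"
  shows "integrable \<nu> (indicator A :: real \<Rightarrow> real)"
proof (rule Bochner_Integration.integrable_bound)
  define m where "m = min 1 (\<delta>\<^sup>2)"
  have m: "0 < m" using \<delta> by (simp add: m_def)
  show "integrable \<nu> (\<lambda>z. inverse m * min 1 (z\<^sup>2))"
    using levy_measure_integrable_min_square[OF levy] by (rule integrable_mult_right)
  show "(indicator A :: real \<Rightarrow> real) \<in> borel_measurable \<nu>"
    using A by (simp add: measurable_cong_sets[OF levy_measure_sets[OF levy] refl])
  have "indicator A z \<le> inverse m * min 1 (z\<^sup>2)" for z :: real
  proof (cases "z \<in> A")
    case True
    then have "\<delta> \<le> \<bar>z\<bar>" using A_away by auto
    then have "\<delta>\<^sup>2 \<le> \<bar>z\<bar>\<^sup>2" using \<delta> by (intro power_mono) auto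
    then have "m \<le> min 1 (z\<^sup>2)" by (auto simp: m_def)
    then show ?thesis using True m by (simp add: field_simps)
  qed (simp add: m less_imp_le)
  then show "AE z in \<nu>. norm (indicator A z :: real) \<le> norm (inverse m * min 1 (z\<^sup>2))"
    using m by (intro AE_I2) simp
qed

lemma levy_measure_integrable_small_square:
  assumes levy: "levy_measure \<nu>" and A: "A \<in> sets borel" and A_small: "A \<subseteq> {-1..1}"
  shows "integrable \<nu> (\<lambda>z. indicator A z * z\<^sup>2)"
proof (rule Bochner_Integration.integrable_bound)
  show "integrable \<nu> (\<lambda>z. min 1 (z\<^sup>2))"
    using levy by (rule levy_measure_integrable_min_square)
  show "(\<lambda>z. indicator A z * z\<^sup>2) \<in> borel_measurable \<nu>"
    using A by (simp add: measurable_cong_sets[OF levy_measure_sets[OF levy] refl])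
  have "indicator A z * z\<^sup>2 \<le> min 1 (z\<^sup>2)" for z :: real
  proof (cases "z \<in> A")
    case True
    then have "\<bar>z\<bar> \<le> 1" using A_small by (force simp: abs_le_iff)
    then have "z\<^sup>2 \<le> 1" by (simp add: abs_square_le_1)
    then show ?thesis using True by simp
  qed simp
  then show "AE z in \<nu>. norm (indicator A z * z\<^sup>2) \<le> norm (min 1 (z\<^sup>2))"
    by (intro AE_I2) simp
qed

definition grid_range :: "nat \<Rightarrow> int set" where
  "grid_range n = {- int n * int n <..< 0}"

lemma finite_grid_range: "finite (grid_range n)"
  by (simp add: grid_range_def)

definition grid_cell :: "nat \<Rightarrow> int \<Rightarrow> real set" where
  "grid_cell n j = {z. \<lceil>real n * z\<rceil> = j}"

text \<open>\<open>\<lceil>n z\<rceil> \<in> grid_range n\<close> holds exactly for \<open>-n < z \<le> -1/n\<close>, and then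
  \<open>z \<le> \<lceil>n z\<rceil> / n < 0\<close>.\<close>

definition grid_approx :: "nat \<Rightarrow> (real \<Rightarrow> 'b::real_vector) \<Rightarrow> real \<Rightarrow> 'b" where
  "grid_approx n g z =
     (if \<lceil>real n * z\<rceil> \<in> grid_range n then g (\<lceil>real n * z\<rceil> / real n) else 0)"

lemma grid_cell_sets [measurable]: "grid_cell n j \<in> sets borel"
  unfolding grid_cell_def by measurable

lemma grid_approx_eq_sum:
  "grid_approx n g z = (\<Sum>j\<in>grid_range n. indicator (grid_cell n j) z *\<^sub>R g (j / real n))"
proof -
  have "(\<Sum>j\<in>grid_range n. indicator (grid_cell n j) z *\<^sub>R g (j / real n)) =
      (\<Sum>j\<in>grid_range n. if j = \<lceil>real n * z\<rceil> then g (j / real n) else 0)"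
    by (intro sum.cong) (auto simp: grid_cell_def)
  then show ?thesis
    by (simp add: grid_approx_def grid_range_def)
qed

lemma grid_range_ceiling_bounds:
  assumes "\<lceil>real n * z\<rceil> \<in> grid_range n"
  shows "0 < n" and "z \<le> \<lceil>real n * z\<rceil> / real n" and "\<lceil>real n * z\<rceil> / real n < 0"
proof -
  show n: "0 < n" using assms by (cases n) (auto simp: grid_range_def)
  show "z \<le> \<lceil>real n * z\<rceil> / real n"
    using n ceiling_correct[of "real n * z"] by (simp add: field_simps)
  show "\<lceil>real n * z\<rceil> / real n < 0"
    using n assms by (simp add: grid_range_def divide_neg_pos)
qed

lemma grid_cell_away_from_zero:
  assumes "j \<in> grid_range n"
  shows "grid_cell n j \<subseteq> {z. 1 / real n \<le> \<bar>z\<bar>}"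
proof
  fix z assume "z \<in> grid_cell n j"
  then have "\<lceil>real n * z\<rceil> \<in> grid_range n" using assms by (simp add: grid_cell_def)
  then have "0 < n" "real n * z \<le> -1"
    using grid_range_ceiling_bounds(1) by (auto simp: grid_range_def)
  then have "1 / real n \<le> - z" by (simp add: field_simps)
  then show "z \<in> {z. 1 / real n \<le> \<bar>z\<bar>}" by simp
qed

lemma eventually_ceiling_in_grid_range:
  assumes "z < 0"
  shows "eventually (\<lambda>n. \<lceil>real n * z\<rceil> \<in> grid_range n) sequentially"
proof -
  obtain N :: nat where N: "1 / (- z) - z < real N" using reals_Archimedean2 by blast
  have "\<lceil>real n * z\<rceil> \<in> grid_range n" if "N \<le> n" for n
  proof -
    have n: "1 / (- z) - z < real n" using N that by linarith
    moreover have "0 < 1 / (- z)" using assms by simp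
    ultimately have inv_z: "1 / (- z) < real n" and z: "- z < real n" using assms by linarith+
    have "1 < real n * (- z)" using inv_z assms by (simp add: field_simps)
    moreover have "real n * (- z) < real n * real n"
      using z assms by (intro mult_strict_left_mono) auto
    ultimately show ?thesis by (auto simp: grid_range_def less_ceiling_iff)
  qed
  then show ?thesis by (rule eventually_sequentiallyI)
qed

lemma ceiling_grid_tendsto: "(\<lambda>n. \<lceil>real n * z\<rceil> / real n) \<longlonglongrightarrow> z"
proof -
  have "norm (\<lceil>real n * z\<rceil> / real n - z) \<le> 1 / real n" if "0 < n" for n
  proof -
    have "0 \<le> \<lceil>real n * z\<rceil> - real n * z" "\<lceil>real n * z\<rceil> - real n * z \<le> 1"
      using ceiling_correct[of "real n * z"] by linarith+
    moreover have "\<lceil>real n * z\<rceil> / real n - z = (\<lceil>real n * z\<rceil> - real n * z) / real n"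
      using that by (simp add: field_simps)
    ultimately show ?thesis by (simp add: divide_right_mono)
  qed
  then have "(\<lambda>n. \<lceil>real n * z\<rceil> / real n - z) \<longlonglongrightarrow> 0"
    by (intro Lim_null_comparison[OF _ lim_1_over_n] eventually_sequentiallyI[of 1]) auto
  then show ?thesis by (simp add: LIM_zero_iff)
qed

lemma
  fixes g :: "real \<Rightarrow> 'b::{banach, second_countable_topology}"
  assumes levy: "levy_measure \<nu>"
  shows integrable_grid_approx: "integrable \<nu> (grid_approx n g)"
    and integral_grid_approx:
      "(\<integral>z. grid_approx n g z \<partial>\<nu>) = (\<Sum>j\<in>grid_range n. measure \<nu> (grid_cell n j) *\<^sub>R g (j / real n))"
proof -
  have cell_int: "integrable \<nu> (indicator (grid_cell n j) :: real \<Rightarrow> real)"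
    if j: "j \<in> grid_range n" for j
  proof -
    have "0 < n" using j by (cases n) (auto simp: grid_range_def)
    then show ?thesis
      using grid_cell_away_from_zero[OF j]
      by (intro levy_measure_integrable_indicator_away_from_zero[OF levy]) auto
  qed
  have eq: "grid_approx n g = (\<lambda>z. \<Sum>j\<in>grid_range n. indicator (grid_cell n j) z *\<^sub>R g (j / real n))"
    by (simp add: grid_approx_eq_sum fun_eq_iff)
  show "integrable \<nu> (grid_approx n g)"
    unfolding eq using cell_int
    by (intro Bochner_Integration.integrable_sum integrable_scaleR_left) auto
  show "(\<integral>z. grid_approx n g z \<partial>\<nu>) =
      (\<Sum>j\<in>grid_range n. measure \<nu> (grid_cell n j) *\<^sub>R g (j / real n))"
    unfolding eq using cell_int
    by (subst Bochner_Integration.integral_sum)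
      (auto intro!: sum.cong integrable_scaleR_left simp: levy_measure_space[OF levy])
qed

lemma tendsto_integral_grid_approx:
  fixes g :: "real \<Rightarrow> 'b::{banach, second_countable_topology}"
  assumes levy: "levy_measure \<nu>" and g: "continuous_on UNIV g"
    and H: "integrable \<nu> H" "\<And>z. 0 \<le> H z"
    and g_le_H: "\<And>z q. z \<le> q \<Longrightarrow> q < 0 \<Longrightarrow> norm (g q) \<le> H z"
  shows "(\<lambda>n. \<integral>z. grid_approx n g z \<partial>\<nu>) \<longlonglongrightarrow> (LINT z:{..<0}|\<nu>. g z)"
  unfolding set_lebesgue_integral_def
proof (rule integral_dominated_convergence[where w=H])
  show "(\<lambda>z. indicator {..<0} z *\<^sub>R g z) \<in> borel_measurable \<nu>"
    using borel_measurable_continuous_onI[OF g]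
    by (simp add: measurable_cong_sets[OF levy_measure_sets[OF levy] refl])
  show "grid_approx n g \<in> borel_measurable \<nu>" for n
    using integrable_grid_approx[OF levy] by (rule borel_measurable_integrable)
  show "AE z in \<nu>. norm (grid_approx n g z) \<le> H z" for n
  proof (intro AE_I2)
    fix z
    show "norm (grid_approx n g z) \<le> H z"
      using grid_range_ceiling_bounds(2,3)[of n z] g_le_H[of z "\<lceil>real n * z\<rceil> / real n"] H(2)[of z]
      by (simp add: grid_approx_def)
  qed
  show "AE z in \<nu>. (\<lambda>n. grid_approx n g z) \<longlonglongrightarrow> indicator {..<0} z *\<^sub>R g z"
  proof (intro AE_I2)
    fix z :: real
    show "(\<lambda>n. grid_approx n g z) \<longlonglongrightarrow> indicator {..<0} z *\<^sub>R g z"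
    proof (cases "z < 0")
      case True
      have "(\<lambda>n. g (\<lceil>real n * z\<rceil> / real n)) \<longlonglongrightarrow> g z"
        using g ceiling_grid_tendsto
        by (intro isCont_tendsto_compose[of z g]) (auto simp: continuous_on_eq_continuous_at)
      moreover have "eventually (\<lambda>n. g (\<lceil>real n * z\<rceil> / real n) = grid_approx n g z) sequentially"
        using eventually_ceiling_in_grid_range[OF True]
        by eventually_elim (simp add: grid_approx_def)
      ultimately have "(\<lambda>n. grid_approx n g z) \<longlonglongrightarrow> g z"
        by (rule Lim_transform_eventually)
      then show ?thesis using True by simp
    next
      case False
      then have "\<lceil>real n * z\<rceil> \<notin> grid_range n" for n
        using grid_range_ceiling_bounds(2,3)[of n z] by linarith
      then show ?thesis using False by (simp add: grid_approx_def)
    qed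
  qed
qed (fact H)

definition jump_dominator :: "real \<Rightarrow> real \<Rightarrow> real" where
  "jump_dominator c z = c\<^sup>2 / 2 * min 1 (z\<^sup>2) + 2 * \<bar>c\<bar> * (indicator {..<-1} z * \<bar>z\<bar>)"

lemma jump_dominator_nonneg: "0 \<le> jump_dominator c z"
  unfolding jump_dominator_def by (simp add: indicator_def)

lemma le_jump_dominator:
  assumes zq: "z \<le> q" "q < 0" and b: "b \<le> (c * q)\<^sup>2 / 2" "b \<le> 2 * \<bar>c\<bar> * \<bar>q\<bar>"
  shows "b \<le> jump_dominator c z"
proof (cases "z < -1")
  case True
  have "\<bar>q\<bar> \<le> \<bar>z\<bar>" using zq by auto
  then have "2 * \<bar>c\<bar> * \<bar>q\<bar> \<le> 2 * \<bar>c\<bar> * \<bar>z\<bar>" by (simp add: mult_left_mono)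
  then have "b \<le> 2 * \<bar>c\<bar> * \<bar>z\<bar>" using b(2) by linarith
  moreover have "jump_dominator c z = c\<^sup>2 / 2 * min 1 (z\<^sup>2) + 2 * \<bar>c\<bar> * \<bar>z\<bar>"
    using True by (simp add: jump_dominator_def)
  moreover have "0 \<le> c\<^sup>2 / 2 * min 1 (z\<^sup>2)" by simp
  ultimately show ?thesis by linarith
next
  case False
  have "\<bar>q\<bar> \<le> \<bar>z\<bar>" and "\<bar>z\<bar> \<le> 1" using zq False by auto
  then have "q\<^sup>2 \<le> z\<^sup>2" and "z\<^sup>2 \<le> 1"
    by (simp_all add: abs_le_square_iff abs_square_le_1)
  then have "(c * q)\<^sup>2 / 2 \<le> c\<^sup>2 / 2 * min 1 (z\<^sup>2)"
    by (simp add: power_mult_distrib mult_left_mono)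
  then show ?thesis
    using False b(1) by (simp add: jump_dominator_def)
qed

lemma norm_iexp_compensated_le_jump_dominator:
  assumes "z \<le> q" "q < 0"
  shows "norm (iexp (u * q) - 1 - \<i> * complex_of_real (u * q)) \<le> jump_dominator u z"
  using assms norm_iexp_compensated_le[of "u * q"]
  by (intro le_jump_dominator[of z q]) (auto simp: abs_mult)

lemma norm_exp_compensated_le_jump_dominator:
  assumes "0 \<le> \<theta>" "z \<le> q" "q < 0"
  shows "norm (exp (\<theta> * q) - 1 - \<theta> * q) \<le> jump_dominator \<theta> z"
proof -
  have "\<theta> * q \<le> 0" using assms by (simp add: mult_nonneg_nonpos)
  then show ?thesis
    using assms exp_compensated_bounds[of "\<theta> * q"]
    by (intro le_jump_dominator[of z q]) (auto simp: abs_mult)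
qed

lemma integrable_jump_dominator:
  assumes levy: "levy_measure \<nu>" and neg_int: "set_integrable \<nu> {..<0} (\<lambda>z. exp z - 1 - z)"
  shows "integrable \<nu> (jump_dominator c)"
proof -
  have "integrable \<nu> (\<lambda>z. indicator {..<-1} z * \<bar>z\<bar>)"
  proof (rule Bochner_Integration.integrable_bound)
    have "integrable \<nu> (\<lambda>z. indicator {..<0} z * (exp z - 1 - z))"
      using neg_int by (simp add: set_integrable_def)
    moreover have "integrable \<nu> (indicator {..<-1} :: real \<Rightarrow> real)"
      by (rule levy_measure_integrable_indicator_away_from_zero[OF levy, of _ 1]) auto
    ultimately show "integrable \<nu> (\<lambda>z. indicator {..<0} z * (exp z - 1 - z) + indicator {..<-1} z)"
      by (rule Bochner_Integration.integrable_add)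
    show "(\<lambda>z. indicator {..<-1} z * \<bar>z\<bar>) \<in> borel_measurable \<nu>"
      by (simp add: measurable_cong_sets[OF levy_measure_sets[OF levy] refl])
    have "norm (indicator {..<-1} z * \<bar>z\<bar>) \<le>
        norm (indicator {..<0} z * (exp z - 1 - z) + indicator {..<-1} z)" for z :: real
    proof (cases "z < -1")
      case True
      have "- z \<le> \<bar>exp z - z\<bar>" using exp_gt_zero[of z] by linarith
      then show ?thesis using True by (simp add: indicator_def)
    qed (simp add: indicator_def)
    then show "AE z in \<nu>. norm (indicator {..<-1} z * \<bar>z\<bar>) \<le>
        norm (indicator {..<0} z * (exp z - 1 - z) + indicator {..<-1} z)"
      by (intro AE_I2)
  qed
  then show ?thesis
    using levy_measure_integrable_min_square[OF levy] unfolding jump_dominator_def[abs_def]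
    by (intro Bochner_Integration.integrable_add integrable_mult_right)
qed

section \<open>Exponential moment of the compensated negative-jump integral\<close>

lemma tendsto_nn_integral_min_real:
  fixes f :: "'a \<Rightarrow> real"
  assumes "f \<in> borel_measurable M"
  shows "(\<lambda>K. \<integral>\<^sup>+x. min (f x) (real K) \<partial>M) \<longlonglongrightarrow> (\<integral>\<^sup>+x. f x \<partial>M)"
proof (rule nn_integral_LIMSEQ)
  show "incseq (\<lambda>K x. ennreal (min (f x) (real K)))"
    by (auto simp: incseq_def le_fun_def intro!: ennreal_leI)
  show "(\<lambda>x. ennreal (min (f x) (real K))) \<in> borel_measurable M" for K
    using assms by measurable
  show "(\<lambda>K. ennreal (min (f x) (real K))) \<longlonglongrightarrow> ennreal (f x)" for x
  proof (rule tendsto_eventually)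
    obtain N :: nat where "f x \<le> real N" using real_arch_simple by blast
    then show "\<forall>\<^sub>F K in sequentially. ennreal (min (f x) (real K)) = ennreal (f x)"
      by (intro eventually_sequentiallyI[of N]) (auto simp: min_def)
  qed
qed

lemma nn_integral_le_of_weak_conv:
  fixes f :: "real \<Rightarrow> real"
  assumes \<mu>: "\<And>n. real_distribution (\<mu> n)" "real_distribution \<mu>'" "weak_conv_m \<mu> \<mu>'"
    and f: "continuous_on UNIV f" "\<And>x. 0 \<le> f x"
    and bound: "\<And>n. (\<integral>\<^sup>+x. f x \<partial>\<mu> n) \<le> ennreal (B n)" and B: "B \<longlonglongrightarrow> b"
  shows "(\<integral>\<^sup>+x. f x \<partial>\<mu>') \<le> ennreal b"
proof -
  have f_meas: "f \<in> borel_measurable borel"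
    using f(1) by (rule borel_measurable_continuous_onI)
  have nn_integral_min: "(\<integral>\<^sup>+x. min (f x) (real K) \<partial>M) = ennreal (\<integral>x. min (f x) (real K) \<partial>M)"
    if "real_distribution M" for K M
  proof -
    interpret real_distribution M by fact
    have "(\<lambda>x. min (f x) (real K)) \<in> borel_measurable M"
      using f_meas by (simp add: measurable_cong_sets[OF events_eq_borel refl])
    then show ?thesis
      using f(2) by (intro nn_integral_eq_integral integrable_const_bound[where B="real K"]) auto
  qed
  have "(\<integral>\<^sup>+x. min (f x) (real K) \<partial>\<mu>') \<le> ennreal b" for K
  proof -
    have "(\<lambda>n. \<integral>x. min (f x) (real K) \<partial>\<mu> n) \<longlonglongrightarrow> (\<integral>x. min (f x) (real K) \<partial>\<mu>')"
      using f
      by (intro weak_conv_imp_integral_bdd_continuous_conv[OF \<mu>, of _ "real K"] continuous_intros)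
        (auto simp: continuous_on_eq_continuous_at)
    moreover have "(\<integral>x. min (f x) (real K) \<partial>\<mu> n) \<le> max 0 (B n)" for n
    proof -
      have "ennreal (\<integral>x. min (f x) (real K) \<partial>\<mu> n) \<le> (\<integral>\<^sup>+x. f x \<partial>\<mu> n)"
        unfolding nn_integral_min[OF \<mu>(1), symmetric] by (intro nn_integral_mono ennreal_leI) simp
      also have "\<dots> \<le> ennreal (B n)" by (rule bound)
      finally show ?thesis by (auto simp: ennreal_le_iff2)
    qed
    ultimately have "(\<integral>x. min (f x) (real K) \<partial>\<mu>') \<le> max 0 b"
      using B by (intro LIMSEQ_le[OF _ tendsto_max[OF tendsto_const]]) auto
    then show ?thesis
      unfolding nn_integral_min[OF \<mu>(2)] by (cases "0 \<le> b") (auto simp: ennreal_le_iff2)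
  qed
  moreover have "f \<in> borel_measurable \<mu>'"
    using f_meas \<mu>(2) by (simp add: measurable_cong_sets[OF real_distribution.events_eq_borel refl])
  ultimately show ?thesis
    by (intro LIMSEQ_le_const2[OF tendsto_nn_integral_min_real]) auto
qed

definition neg_jump_approx :: "real measure \<Rightarrow> real \<Rightarrow> nat \<Rightarrow> real measure" where
  "neg_jump_approx \<nu> t n =
     centred_compound_poisson (grid_range n) (\<lambda>j. j / real n) (\<lambda>j. t * measure \<nu> (grid_cell n j))"

lemma char_neg_jump_approx:
  assumes levy: "levy_measure \<nu>" and t: "0 \<le> t"
  shows "char (neg_jump_approx \<nu> t n) u =
    exp (t * (\<integral>z. grid_approx n (\<lambda>z. iexp (u * z) - 1 - \<i> * complex_of_real (u * z)) z \<partial>\<nu>))"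
  using t by (simp add: neg_jump_approx_def char_centred_compound_poisson finite_grid_range
      integral_grid_approx[OF levy] sum_distrib_left scaleR_conv_of_real mult_ac)

lemma nn_integral_exp_neg_jump_approx:
  assumes levy: "levy_measure \<nu>" and t: "0 \<le> t"
  shows "(\<integral>\<^sup>+x. exp (\<theta> * x) \<partial>neg_jump_approx \<nu> t n) =
    exp (t * (\<integral>z. grid_approx n (\<lambda>z. exp (\<theta> * z) - 1 - \<theta> * z) z \<partial>\<nu>))"
  unfolding neg_jump_approx_def using t
  by (subst nn_integral_exp_centred_compound_poisson)
    (auto simp: finite_grid_range integral_grid_approx[OF levy] sum_distrib_left mult_ac)

lemma weak_conv_neg_jump_approx:
  assumes levy: "levy_measure \<nu>" and neg_int: "set_integrable \<nu> {..<0} (\<lambda>z. exp z - 1 - z)"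
    and t: "0 \<le> t" and \<mu>: "real_distribution \<mu>"
    and char_\<mu>: "\<And>u. char \<mu> u = comp_neg_jump_char \<nu> t u"
  shows "weak_conv_m (neg_jump_approx \<nu> t) \<mu>"
proof (rule levy_continuity)
  show "real_distribution (neg_jump_approx \<nu> t n)" for n
    by (simp add: neg_jump_approx_def real_distribution_centred_compound_poisson)
  show "real_distribution \<mu>" by fact
  fix u :: real
  let ?g = "\<lambda>z. iexp (u * z) - 1 - \<i> * complex_of_real (u * z)"
  have "(\<lambda>n. \<integral>z. grid_approx n ?g z \<partial>\<nu>) \<longlonglongrightarrow> (LINT z:{..<0}|\<nu>. ?g z)"
  proof (rule tendsto_integral_grid_approx[OF levy _ integrable_jump_dominator[OF levy neg_int]])
    show "continuous_on UNIV ?g" by (intro continuous_intros)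
    show "0 \<le> jump_dominator u z" for z by (rule jump_dominator_nonneg)
    show "norm (?g q) \<le> jump_dominator u z" if "z \<le> q" "q < 0" for z q
      using that by (rule norm_iexp_compensated_le_jump_dominator)
  qed
  then show "(\<lambda>n. char (neg_jump_approx \<nu> t n) u) \<longlonglongrightarrow> char \<mu> u"
    unfolding char_neg_jump_approx[OF levy t] char_\<mu> comp_neg_jump_char_def
    by (intro tendsto_intros)
qed

lemma nn_integral_exp_le_comp_neg_jump:
  assumes levy: "levy_measure \<nu>" and neg_int: "set_integrable \<nu> {..<0} (\<lambda>z. exp z - 1 - z)"
    and t: "0 \<le> t" and \<theta>: "0 \<le> \<theta>" and \<mu>: "real_distribution \<mu>"
    and char_\<mu>: "\<And>u. char \<mu> u = comp_neg_jump_char \<nu> t u"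
  shows "(\<integral>\<^sup>+x. exp (\<theta> * x) \<partial>\<mu>) \<le> exp (t * (LINT z:{..<0}|\<nu>. exp (\<theta> * z) - 1 - \<theta> * z))"
proof (rule nn_integral_le_of_weak_conv)
  show "real_distribution (neg_jump_approx \<nu> t n)" for n
    by (simp add: neg_jump_approx_def real_distribution_centred_compound_poisson)
  show "weak_conv_m (neg_jump_approx \<nu> t) \<mu>"
    by (rule weak_conv_neg_jump_approx[OF levy neg_int t \<mu> char_\<mu>])
  show "(\<integral>\<^sup>+x. exp (\<theta> * x) \<partial>neg_jump_approx \<nu> t n) \<le>
      ennreal (exp (t * (\<integral>z. grid_approx n (\<lambda>z. exp (\<theta> * z) - 1 - \<theta> * z) z \<partial>\<nu>)))" for n
    by (simp add: nn_integral_exp_neg_jump_approx[OF levy t])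
  let ?G = "\<lambda>z. exp (\<theta> * z) - 1 - \<theta> * z"
  have "(\<lambda>n. \<integral>z. grid_approx n ?G z \<partial>\<nu>) \<longlonglongrightarrow> (LINT z:{..<0}|\<nu>. ?G z)"
  proof (rule tendsto_integral_grid_approx[OF levy _ integrable_jump_dominator[OF levy neg_int]])
    show "continuous_on UNIV ?G" by (intro continuous_intros)
    show "0 \<le> jump_dominator \<theta> z" for z by (rule jump_dominator_nonneg)
    show "norm (?G q) \<le> jump_dominator \<theta> z" if "z \<le> q" "q < 0" for z q
      using \<theta> that by (rule norm_exp_compensated_le_jump_dominator)
  qed
  then show "(\<lambda>n. exp (t * (\<integral>z. grid_approx n ?G z \<partial>\<nu>))) \<longlonglongrightarrow> exp (t * (LINT z:{..<0}|\<nu>. ?G z))"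
    by (intro tendsto_intros)
  show "continuous_on UNIV (\<lambda>x. exp (\<theta> * x))" by (intro continuous_intros)
qed (auto intro: \<mu>)

lemma set_integrable_exp_compensated:
  assumes levy: "levy_measure \<nu>" and neg_int: "set_integrable \<nu> {..<0} (\<lambda>z. exp z - 1 - z)"
    and \<theta>: "0 \<le> \<theta>"
  shows "set_integrable \<nu> {..<0} (\<lambda>z. exp (\<theta> * z) - 1 - \<theta> * z)"
  unfolding set_integrable_def
proof (rule Bochner_Integration.integrable_bound[OF integrable_jump_dominator[OF levy neg_int]])
  show "(\<lambda>z. indicator {..<0} z *\<^sub>R (exp (\<theta> * z) - 1 - \<theta> * z)) \<in> borel_measurable \<nu>"
    by (simp add: measurable_cong_sets[OF levy_measure_sets[OF levy] refl])
  have "norm (indicator {..<0} z *\<^sub>R (exp (\<theta> * z) - 1 - \<theta> * z)) \<le> norm (jump_dominator \<theta> z)"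
    for z :: real
    using norm_exp_compensated_le_jump_dominator[OF \<theta> order_refl, of z] jump_dominator_nonneg[of \<theta> z]
    by (cases "z < 0") auto
  then show "AE z in \<nu>. norm (indicator {..<0} z *\<^sub>R (exp (\<theta> * z) - 1 - \<theta> * z)) \<le>
      norm (jump_dominator \<theta> z)"
    by (intro AE_I2)
qed

lemma set_integral_exp_compensated_le:
  assumes levy: "levy_measure \<nu>" and neg_int: "set_integrable \<nu> {..<0} (\<lambda>z. exp z - 1 - z)"
    and \<theta>: "0 \<le> \<theta>" and \<epsilon>: "0 < \<epsilon>" "\<epsilon> \<le> 1"
  shows "(LINT z:{..<0}|\<nu>. exp (\<theta> * z) - 1 - \<theta> * z) - \<theta> * (LINT z:{..<0}|\<nu>. exp z - 1 - z)
    \<le> \<theta>\<^sup>2 / 2 * (LINT z:{-\<epsilon>..<0}|\<nu>. z\<^sup>2) + \<theta> * measure \<nu> {..<-\<epsilon>}"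
proof -
  let ?G = "\<lambda>z. indicator {..<0} z * (exp (\<theta> * z) - 1 - \<theta> * z)"
  let ?E = "\<lambda>z. indicator {..<0} z * (exp z - 1 - z)"
  have int_G: "integrable \<nu> ?G" and int_E: "integrable \<nu> ?E"
    using set_integrable_exp_compensated[OF levy neg_int \<theta>] neg_int
    by (simp_all add: set_integrable_def)
  have int_small: "integrable \<nu> (\<lambda>z. indicator {-\<epsilon>..<0} z * z\<^sup>2)"
    using \<epsilon> by (intro levy_measure_integrable_small_square[OF levy]) auto
  have int_big: "integrable \<nu> (indicator {..<-\<epsilon>} :: real \<Rightarrow> real)"
    using \<epsilon> by (intro levy_measure_integrable_indicator_away_from_zero[OF levy _ \<epsilon>(1)]) auto
  have "(LINT z:{..<0}|\<nu>. exp (\<theta> * z) - 1 - \<theta> * z) - \<theta> * (LINT z:{..<0}|\<nu>. exp z - 1 - z) =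
      (\<integral>z. ?G z - \<theta> * ?E z \<partial>\<nu>)"
    unfolding set_lebesgue_integral_def real_scaleR_def
    by (simp only: Bochner_Integration.integral_diff[OF int_G integrable_mult_right[OF int_E]]
        integral_mult_right_zero)
  also have "\<dots> \<le> (\<integral>z. \<theta>\<^sup>2 / 2 * (indicator {-\<epsilon>..<0} z * z\<^sup>2) + \<theta> * indicator {..<-\<epsilon>} z \<partial>\<nu>)"
    using int_G int_E int_small int_big exp_compensated_difference_le[OF \<theta> \<epsilon>(1)]
    by (intro integral_mono) auto
  also have "\<dots> = \<theta>\<^sup>2 / 2 * (LINT z:{-\<epsilon>..<0}|\<nu>. z\<^sup>2) + \<theta> * measure \<nu> {..<-\<epsilon>}"
    using int_small int_big by (simp add: set_lebesgue_integral_def levy_measure_space[OF levy])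
  finally show ?thesis .
qed

section \<open>The Chernoff bound\<close>

lemma nn_integral_exp_normal_density:
  assumes s: "0 < s"
  shows "(\<integral>\<^sup>+x. normal_density 0 s x * ennreal (exp (b * x)) \<partial>lborel) = exp (b\<^sup>2 * s\<^sup>2 / 2)"
proof -
  have "normal_density 0 s x * exp (b * x) = exp (b\<^sup>2 * s\<^sup>2 / 2) * normal_density (b * s\<^sup>2) s x"
    for x
  proof -
    have "- x\<^sup>2 / (2 * s\<^sup>2) + b * x = - (x - b * s\<^sup>2)\<^sup>2 / (2 * s\<^sup>2) + b\<^sup>2 * s\<^sup>2 / 2"
      using s by (simp add: field_simps power2_eq_square)
    then show ?thesis
      unfolding normal_density_def by (simp add: exp_add[symmetric] mult_ac)
  qed
  then have "(\<integral>\<^sup>+x. normal_density 0 s x * ennreal (exp (b * x)) \<partial>lborel) =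
      (\<integral>\<^sup>+x. exp (b\<^sup>2 * s\<^sup>2 / 2) * ennreal (normal_density (b * s\<^sup>2) s x) \<partial>lborel)"
    by (intro nn_integral_cong) (simp add: ennreal_mult'[symmetric])
  also have "\<dots> = exp (b\<^sup>2 * s\<^sup>2 / 2) * (\<integral>\<^sup>+x. normal_density (b * s\<^sup>2) s x \<partial>lborel)"
    by (rule nn_integral_cmult) simp
  also have "(\<integral>\<^sup>+x. normal_density (b * s\<^sup>2) s x \<partial>lborel) = 1"
    using s by (subst nn_integral_eq_integral) auto
  finally show ?thesis by simp
qed

lemma (in prob_space) indep_var_nn_integral:
  fixes X Y :: "'a \<Rightarrow> real" and f g :: "real \<Rightarrow> ennreal"
  assumes indep: "indep_var borel X borel Y"
    and f: "f \<in> borel_measurable borel" and g: "g \<in> borel_measurable borel"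
  shows "(\<integral>\<^sup>+x. f (X x) * g (Y x) \<partial>M) = (\<integral>\<^sup>+x. f (X x) \<partial>M) * (\<integral>\<^sup>+x. g (Y x) \<partial>M)"
proof -
  have X: "random_variable borel X" and Y: "random_variable borel Y"
    and joint: "distr M borel X \<Otimes>\<^sub>M distr M borel Y = distr M (borel \<Otimes>\<^sub>M borel) (\<lambda>x. (X x, Y x))"
    using indep by (auto simp: indep_var_distribution_eq)
  interpret DX: prob_space "distr M borel X" using X by (rule prob_space_distr)
  interpret DY: prob_space "distr M borel Y" using Y by (rule prob_space_distr)
  interpret pair_sigma_finite "distr M borel X" "distr M borel Y" ..
  have "(\<integral>\<^sup>+x. f (X x) * g (Y x) \<partial>M) =
      (\<integral>\<^sup>+z. f (fst z) * g (snd z) \<partial>(distr M borel X \<Otimes>\<^sub>M distr M borel Y))"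
    using X Y f g by (simp add: joint nn_integral_distr)
  also have "\<dots> = (\<integral>\<^sup>+a. \<integral>\<^sup>+b. f a * g b \<partial>distr M borel Y \<partial>distr M borel X)"
    using f g by (simp add: DY.nn_integral_fst[symmetric])
  also have "\<dots> = (\<integral>\<^sup>+a. f a * (\<integral>\<^sup>+b. g b \<partial>distr M borel Y) \<partial>distr M borel X)"
    using g by (intro nn_integral_cong nn_integral_cmult) auto
  also have "\<dots> = (\<integral>\<^sup>+x. f (X x) \<partial>M) * (\<integral>\<^sup>+x. g (Y x) \<partial>M)"
    using X Y f g by (simp add: nn_integral_multc nn_integral_distr)
  finally show ?thesis .
qed

lemma emeasure_ge_le_nn_integral_exp:
  assumes "0 \<le> \<theta>" and "{x \<in> space M. a \<le> f x} \<in> sets M"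
  shows "emeasure M {x \<in> space M. a \<le> f x} \<le> (\<integral>\<^sup>+x. exp (\<theta> * (f x - a)) \<partial>M)"
proof -
  have "indicator {x \<in> space M. a \<le> f x} x \<le> ennreal (exp (\<theta> * (f x - a)))" for x
    using assms(1) by (auto simp: indicator_def)
  then have "(\<integral>\<^sup>+x. indicator {x \<in> space M. a \<le> f x} x \<partial>M) \<le> (\<integral>\<^sup>+x. exp (\<theta> * (f x - a)) \<partial>M)"
    by (intro nn_integral_mono)
  then show ?thesis using assms(2) by simp
qed

lemma (in prob_space) nn_integral_exp_gaussian_plus_neg_jump_le:
  fixes \<nu> :: "real measure" and W J :: "'a \<Rightarrow> real"
  assumes levy: "levy_measure \<nu>" and neg_int: "set_integrable \<nu> {..<0} (\<lambda>z. exp z - 1 - z)"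
    and t: "0 < t" and \<theta>: "0 \<le> \<theta>"
    and W: "distributed M lborel W (normal_density 0 (sqrt t))"
    and J: "\<And>u. char (distr M borel J) u = comp_neg_jump_char \<nu> t u"
    and indep: "indep_var borel W borel J"
  shows "(\<integral>\<^sup>+x. exp (\<theta> * (\<sigma> * W x + J x)) \<partial>M) \<le>
    exp ((\<theta> * \<sigma>)\<^sup>2 * t / 2 + t * (LINT z:{..<0}|\<nu>. exp (\<theta> * z) - 1 - \<theta> * z))"
proof -
  have J_rv: "random_variable borel J" using indep by (simp add: indep_var_distribution_eq)
  have "(\<integral>\<^sup>+x. exp (\<theta> * (\<sigma> * W x + J x)) \<partial>M) =
      (\<integral>\<^sup>+x. ennreal (exp (\<theta> * \<sigma> * W x)) * ennreal (exp (\<theta> * J x)) \<partial>M)"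
    by (intro nn_integral_cong)
      (simp add: ennreal_mult'[symmetric] exp_add[symmetric] algebra_simps)
  also have "\<dots> = (\<integral>\<^sup>+x. exp (\<theta> * \<sigma> * W x) \<partial>M) * (\<integral>\<^sup>+x. exp (\<theta> * J x) \<partial>M)"
    by (rule indep_var_nn_integral[OF indep, of "\<lambda>w. exp (\<theta> * \<sigma> * w)" "\<lambda>j. exp (\<theta> * j)"]) auto
  also have "(\<integral>\<^sup>+x. exp (\<theta> * \<sigma> * W x) \<partial>M) = exp ((\<theta> * \<sigma>)\<^sup>2 * t / 2)"
    using distributed_nn_integral[OF W, of "\<lambda>w. exp (\<theta> * \<sigma> * w)"]
      nn_integral_exp_normal_density[of "sqrt t" "\<theta> * \<sigma>"] t
    by simp
  also have "(\<integral>\<^sup>+x. exp (\<theta> * J x) \<partial>M) = (\<integral>\<^sup>+x. exp (\<theta> * x) \<partial>distr M borel J)"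
    using J_rv by (simp add: nn_integral_distr)
  also have "\<dots> \<le> exp (t * (LINT z:{..<0}|\<nu>. exp (\<theta> * z) - 1 - \<theta> * z))"
    using J_rv t
    by (intro nn_integral_exp_le_comp_neg_jump[OF levy neg_int _ \<theta> _ J] real_distribution_distr) auto
  finally show ?thesis
    by (simp add: exp_add ennreal_mult'[symmetric] mult_left_mono)
qed

lemma (in prob_space) gaussian_plus_neg_jump_tail_le:
  fixes \<nu> :: "real measure" and W J :: "'a \<Rightarrow> real"
  assumes levy: "levy_measure \<nu>" and neg_int: "set_integrable \<nu> {..<0} (\<lambda>z. exp z - 1 - z)"
    and t: "0 < t" and \<theta>: "0 \<le> \<theta>" and \<epsilon>: "0 < \<epsilon>" "\<epsilon> \<le> 1"
    and W: "distributed M lborel W (normal_density 0 (sqrt t))"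
    and J: "\<And>u. char (distr M borel J) u = comp_neg_jump_char \<nu> t u"
    and indep: "indep_var borel W borel J"
  shows "prob {x \<in> space M. a \<le> \<sigma> * W x - \<sigma>\<^sup>2 * t / 2 + (J x - t * (LINT z:{..<0}|\<nu>. exp z - 1 - z))}
    \<le> exp (- \<theta> * a + \<theta> * t * (measure \<nu> {..<-\<epsilon>} - \<sigma>\<^sup>2 / 2)
           + \<theta>\<^sup>2 * t * (\<sigma>\<^sup>2 + (LINT z:{-\<epsilon>..<0}|\<nu>. z\<^sup>2)) / 2)"
proof -
  define K where "K = (LINT z:{..<0}|\<nu>. exp z - 1 - z)"
  define \<Phi> where "\<Phi> = (LINT z:{..<0}|\<nu>. exp (\<theta> * z) - 1 - \<theta> * z)"
  define b where "b = a + \<sigma>\<^sup>2 * t / 2 + t * K"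
  have W_rv[measurable]: "random_variable borel W" and J_rv[measurable]: "random_variable borel J"
    using indep by (auto simp: indep_var_distribution_eq)
  have "{x \<in> space M. a \<le> \<sigma> * W x - \<sigma>\<^sup>2 * t / 2 + (J x - t * K)} = {x \<in> space M. b \<le> \<sigma> * W x + J x}"
    by (auto simp: b_def)
  also have "emeasure M \<dots> \<le> (\<integral>\<^sup>+x. exp (\<theta> * (\<sigma> * W x + J x - b)) \<partial>M)"
    by (intro emeasure_ge_le_nn_integral_exp \<theta>) measurable
  also have "\<dots> = exp (- \<theta> * b) * (\<integral>\<^sup>+x. exp (\<theta> * (\<sigma> * W x + J x)) \<partial>M)"
    by (subst nn_integral_cmult[symmetric], measurable)
      (auto intro!: nn_integral_cong simp: ennreal_mult'[symmetric] exp_add[symmetric] algebra_simps)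
  also have "\<dots> \<le> ennreal (exp (- \<theta> * b)) * ennreal (exp ((\<theta> * \<sigma>)\<^sup>2 * t / 2 + t * \<Phi>))"
    unfolding \<Phi>_def
    by (intro mult_left_mono nn_integral_exp_gaussian_plus_neg_jump_le[OF levy neg_int t \<theta> W J indep])
      auto
  also have "\<dots> = exp (- \<theta> * b + (\<theta> * \<sigma>)\<^sup>2 * t / 2 + t * \<Phi>)"
    by (simp add: ennreal_mult'[symmetric] exp_add[symmetric] add.assoc)
  finally have tail: "prob {x \<in> space M. a \<le> \<sigma> * W x - \<sigma>\<^sup>2 * t / 2 + (J x - t * K)}
      \<le> exp (- \<theta> * b + (\<theta> * \<sigma>)\<^sup>2 * t / 2 + t * \<Phi>)"
    by (simp add: emeasure_eq_measure)
  have "t * (\<Phi> - \<theta> * K) \<le> t * (\<theta>\<^sup>2 / 2 * (LINT z:{-\<epsilon>..<0}|\<nu>. z\<^sup>2) + \<theta> * measure \<nu> {..<-\<epsilon>})"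
    unfolding \<Phi>_def K_def using t set_integral_exp_compensated_le[OF levy neg_int \<theta> \<epsilon>] by simp
  then have "- \<theta> * b + (\<theta> * \<sigma>)\<^sup>2 * t / 2 + t * \<Phi> \<le> - \<theta> * a + \<theta> * t * (measure \<nu> {..<-\<epsilon>} - \<sigma>\<^sup>2 / 2)
           + \<theta>\<^sup>2 * t * (\<sigma>\<^sup>2 + (LINT z:{-\<epsilon>..<0}|\<nu>. z\<^sup>2)) / 2"
    by (simp add: b_def algebra_simps power2_eq_square add_divide_distrib)
  with tail show ?thesis unfolding K_def by (meson exp_le_cancel_iff order_trans)
qed

lemma sqrt_mul_le_of_le_square_div:
  fixes \<tau> a c :: real
  assumes "0 < c" "0 \<le> \<tau>" "a = 0 \<or> \<tau> \<le> c\<^sup>2 / a\<^sup>2"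
  shows "sqrt \<tau> * a \<le> c"
proof (cases "a = 0")
  case False
  then have "sqrt \<tau> \<le> sqrt (c\<^sup>2 / a\<^sup>2)" using assms(3) by simp
  also have "\<dots> = c / \<bar>a\<bar>" using assms(1) by (simp add: real_sqrt_divide)
  finally have "sqrt \<tau> * \<bar>a\<bar> \<le> c" using False by (simp add: field_simps)
  moreover have "sqrt \<tau> * a \<le> sqrt \<tau> * \<bar>a\<bar>" using assms(2) by (intro mult_left_mono) auto
  ultimately show ?thesis by linarith
qed (use assms in simp)

theorem lemma4p6:
  fixes M :: "'a measure" and \<nu> :: "real measure"
    and \<sigma> b r \<delta> \<epsilon> c :: real
    and W Jc :: "real \<Rightarrow> 'a \<Rightarrow> real"
  assumes levy: "levy_measure \<nu>"
    and cond_i: "\<sigma> \<noteq> 0 \<or> emeasure \<nu> {..<0} > 0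
                 \<or> (\<integral>\<^sup>+ z. indicator {0<..1} z * ennreal z \<partial>\<nu>) = \<infinity>"
    and cond_ii: "\<sigma> \<noteq> 0 \<or> emeasure \<nu> {0<..} > 0
                 \<or> (\<integral>\<^sup>+ z. indicator {-1..<0} z * ennreal \<bar>z\<bar> \<partial>\<nu>) = \<infinity>"
    and cond_iii: "set_integrable \<nu> {1..} exp"
    and b_def: "b = - \<sigma>\<^sup>2 / 2
        - (LINT z:-{0}|\<nu>. exp z - 1 - z * indicator {-1..1} z)"
    and neg_int: "set_integrable \<nu> {..<0} (\<lambda>z. exp z - 1 - z)"
    and r: "r \<ge> 0" and \<delta>: "\<delta> \<ge> 0"
    and d_pos: "r - \<delta> - (LINT z:{0<..}|\<nu>. exp z - 1) > 0"
    and sigma_pos: "\<sigma> > 0"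
    and P: "prob_space M"
    and W: "bm_marginals M W"
    and Jc_meas: "\<And>t. Jc t \<in> borel_measurable M"
    and Jc_law: "\<And>t u. t > 0 \<Longrightarrow> char (distr M borel (Jc t)) u = comp_neg_jump_char \<nu> t u"
    and indep: "\<And>t. t > 0 \<Longrightarrow> prob_space.indep_var M borel (W t) borel (Jc t)"
    and eps: "0 < \<epsilon>" "\<epsilon> < 1"
    and c: "0 < c"
  shows "\<forall>\<tau>. \<tau> > 0 \<and>
           (measure \<nu> {..<-\<epsilon>} = \<sigma>\<^sup>2 / 2 \<or>
            \<tau> \<le> c\<^sup>2 / (measure \<nu> {..<-\<epsilon>} - \<sigma>\<^sup>2 / 2)\<^sup>2) \<longrightarrow>
         (let L = \<sigma>\<^sup>2 + 2 * (LINT z:{-\<epsilon>..<0}|\<nu>. z\<^sup>2);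
              p = (c - sqrt \<tau> * (measure \<nu> {..<-\<epsilon>} - \<sigma>\<^sup>2 / 2)) / L;
              XW = (\<lambda>x. \<sigma> * W \<tau> x - \<sigma>\<^sup>2 * \<tau> / 2);
              Jm = (\<lambda>x. Jc \<tau> x - \<tau> * (LINT z:{..<0}|\<nu>. exp z - 1 - z))
          in p \<ge> 0 \<and>
             measure M {x \<in> space M. XW x + Jm x \<ge> c * sqrt \<tau>} \<le> exp (- L * p\<^sup>2 / 2))"
proof (intro allI impI, goal_cases)
  case (1 \<tau>)
  interpret prob_space M by (rule P)
  define A where "A = measure \<nu> {..<-\<epsilon>} - \<sigma>\<^sup>2 / 2"
  define I where "I = (LINT z:{-\<epsilon>..<0}|\<nu>. z\<^sup>2)"
  define K where "K = (LINT z:{..<0}|\<nu>. exp z - 1 - z)"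
  define L where "L = \<sigma>\<^sup>2 + 2 * I"
  define p where "p = (c - sqrt \<tau> * A) / L"
  define \<theta> where "\<theta> = p / sqrt \<tau>"
  have \<tau>: "0 < \<tau>" using 1 by simp
  have I: "0 \<le> I"
    unfolding I_def set_lebesgue_integral_def
    by (intro Bochner_Integration.integral_nonneg) (auto simp: indicator_def)
  then have L: "0 < L" using sigma_pos by (simp add: L_def add_pos_nonneg)
  have "sqrt \<tau> * A \<le> c"
    using 1 c by (intro sqrt_mul_le_of_le_square_div) (auto simp: A_def)
  then have p: "0 \<le> p" using L by (simp add: p_def)
  have "prob {x \<in> space M. c * sqrt \<tau> \<le> \<sigma> * W \<tau> x - \<sigma>\<^sup>2 * \<tau> / 2 + (Jc \<tau> x - \<tau> * K)}
      \<le> exp (- \<theta> * (c * sqrt \<tau>) + \<theta> * \<tau> * A + \<theta>\<^sup>2 * \<tau> * (\<sigma>\<^sup>2 + I) / 2)"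
    unfolding A_def I_def K_def using \<tau> p eps W indep Jc_law
    by (intro gaussian_plus_neg_jump_tail_le[OF levy neg_int]) (auto simp: \<theta>_def bm_marginals_def)
  also have "- \<theta> * (c * sqrt \<tau>) + \<theta> * \<tau> * A + \<theta>\<^sup>2 * \<tau> * (\<sigma>\<^sup>2 + I) / 2 = - L * p\<^sup>2 / 2 - p\<^sup>2 * I / 2"
  proof -
    have "c = p * L + sqrt \<tau> * A" using L by (simp add: p_def)
    then show ?thesis using \<tau> by (simp add: \<theta>_def L_def field_simps power2_eq_square)
  qed
  also have "\<dots> \<le> - L * p\<^sup>2 / 2" using I by simp
  finally show ?case
    using p unfolding Let_def L_def p_def A_def I_def K_def by (simp add: add_diff_eq)
qed

end
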